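(* The set $H:=\{x\in 3^\omega:\exists^\infty n\,(x(n)=2)\}$ is $\mathbb{T}$-comeager; consequently a set $X\subseteq 3^\omega$ is $\mathbb{T}$-measurable iff $X\cap H$ is $\mathbb{T}$-measurable.
   Context: $\mathbb{T}$ is the tree-forcing (ordered by inclusion) consisting of perfect trees $p\subseteq 3^{<\omega}$ together with a set $A_p\subseteq\omega$ (the splitting levels of $p$) such that: for every $t\in p$, $|t|\in A_p$ iff $t$ is a splitting node of $p$; every splitting node $t$ is fully splitting (i.e. $t^\frown i\in p$ for every $i\in 3$); for every $s\supseteq \mathrm{stem}(p)$ which is not splitting, $s^\frown 2\notin p$; and for all non-splitting $s,t\in p$ with $|s|=|t|$ and all $i\in 2$, $s^\frown i\in p\Leftrightarrow t^\frown i\in p$. Here $s^\frown i$ denotes $s$ extended by the value $i$. $X$ is $\mathbb{T}$-nowhere dense if every $p$ has $q\leq p$ with $[q]\cap X=\emptyset$; $\mathbb{T}$-meager means a countable union of such sets; $X$ is $\mathbb{T}$-measurable if every $p$ has $q\leq p$ with $[q]\cap X$ or $[q]\setminus X$ $\mathbb{T}$-meager. *)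

theory Defs
  imports Main "HOL-Library.Sublist"
begin

text \<open>Finite sequences in 3^{<omega} are nat lists with entries < 3;
  elements of 3^omega are functions nat => nat with values < 3.\<close>

definition Cantor3 :: "(nat \<Rightarrow> nat) set" where
  "Cantor3 = {x. \<forall>n. x n < 3}"

definition is_tree3 :: "nat list set \<Rightarrow> bool" where
  "is_tree3 p \<longleftrightarrow> p \<noteq> {} \<and> (\<forall>t\<in>p. \<forall>i\<in>set t. i < 3)
     \<and> (\<forall>t\<in>p. \<forall>s. prefix s t \<longrightarrow> s \<in> p)"

definition splitting :: "nat list set \<Rightarrow> nat list \<Rightarrow> bool" where
  "splitting p t \<longleftrightarrow> t \<in> p \<and> (\<exists>i j. i \<noteq> j \<and> t @ [i] \<in> p \<and> t @ [j] \<in> p)"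

definition perfect3 :: "nat list set \<Rightarrow> bool" where
  "perfect3 p \<longleftrightarrow> (\<forall>t\<in>p. \<exists>s\<in>p. prefix t s \<and> splitting p s)"

definition stem :: "nat list set \<Rightarrow> nat list" where
  "stem p = (THE t. t \<in> p \<and> splitting p t \<and> (\<forall>s\<in>p. prefix s t \<or> prefix t s))"

definition T_cond :: "nat list set \<Rightarrow> nat set \<Rightarrow> bool" where
  "T_cond p A \<longleftrightarrow> is_tree3 p \<and> perfect3 p
     \<and> (\<forall>t\<in>p. length t \<in> A \<longleftrightarrow> splitting p t)
     \<and> (\<forall>t\<in>p. splitting p t \<longrightarrow> (\<forall>i<3. t @ [i] \<in> p))
     \<and> (\<forall>s\<in>p. prefix (stem p) s \<and> \<not> splitting p s \<longrightarrow> s @ [2] \<notin> p)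
     \<and> (\<forall>s\<in>p. \<forall>t\<in>p. \<not> splitting p s \<and> \<not> splitting p t \<and> length s = length t
          \<longrightarrow> (\<forall>i<2. s @ [i] \<in> p \<longleftrightarrow> t @ [i] \<in> p))"

definition body :: "nat list set \<Rightarrow> (nat \<Rightarrow> nat) set" where
  "body p = {x \<in> Cantor3. \<forall>n. map x [0..<n] \<in> p}"

definition T_nowhere_dense :: "(nat \<Rightarrow> nat) set \<Rightarrow> bool" where
  "T_nowhere_dense X \<longleftrightarrow> (\<forall>p A. T_cond p A \<longrightarrow>
     (\<exists>q B. T_cond q B \<and> q \<subseteq> p \<and> body q \<inter> X = {}))"

definition T_meager :: "(nat \<Rightarrow> nat) set \<Rightarrow> bool" where
  "T_meager X \<longleftrightarrow> (\<exists>N :: nat \<Rightarrow> (nat \<Rightarrow> nat) set.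
     (\<forall>n. T_nowhere_dense (N n)) \<and> X = (\<Union>n. N n))"

definition T_comeager :: "(nat \<Rightarrow> nat) set \<Rightarrow> bool" where
  "T_comeager X \<longleftrightarrow> T_meager (Cantor3 - X)"

definition T_measurable :: "(nat \<Rightarrow> nat) set \<Rightarrow> bool" where
  "T_measurable X \<longleftrightarrow> (\<forall>p A. T_cond p A \<longrightarrow>
     (\<exists>q B. T_cond q B \<and> q \<subseteq> p \<and>
        (T_meager (body q \<inter> X) \<or> T_meager (body q - X))))"

end

theory Submission
  imports Defs "HOL-Library.Infinite_Set"
begin

(* For each n, the branches taking no value 2 from n on form a T-nowhere dense set: given a
   condition p, pick a splitting node s of length at least n and a splitting node u extending
   s @ [2]; the nodes of p comparable with u again form a condition, and each of its branches
   takes the value 2 at position length s. Hence the complement of H is T-meager, and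
   T-measurability is invariant under changing a set by a T-meager set. *)

lemma prefix_length_ge_imp_eq: "prefix xs ys \<Longrightarrow> length ys \<le> length xs \<Longrightarrow> xs = ys"
  by (auto simp: prefix_def)

lemma prefix_same_length_eq:
  "prefix xs zs \<Longrightarrow> prefix ys zs \<Longrightarrow> length xs = length ys \<Longrightarrow> xs = ys"
  by (metis prefix_length_prefix prefix_order.antisym order_refl)

lemma comparable_prefix_le:
  "prefix xs ys \<or> prefix ys xs \<Longrightarrow> length xs \<le> length ys \<Longrightarrow> prefix xs ys"
  using prefix_length_ge_imp_eq by blast

lemma is_tree3_prefix_closed: "is_tree3 p \<Longrightarrow> t \<in> p \<Longrightarrow> prefix s t \<Longrightarrow> s \<in> p"
  unfolding is_tree3_def by blast

lemma Nil_in_tree3: "is_tree3 p \<Longrightarrow> [] \<in> p"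
  by (metis Nil_prefix all_not_in_conv is_tree3_def)

section \<open>The stem\<close>

lemma splitting_not_strict_prefix:
  assumes "splitting p t" and comparable: "\<forall>s\<in>p. prefix s w \<or> prefix w s"
  shows "\<not> strict_prefix t w"
proof
  assume "strict_prefix t w"
  then have short: "length (t @ [i]) \<le> length w" for i
    using prefix_length_less by fastforce
  obtain i j where "i \<noteq> j" "t @ [i] \<in> p" "t @ [j] \<in> p"
    using assms(1) unfolding splitting_def by blast
  then have "prefix (t @ [i]) w" "prefix (t @ [j]) w"
    using comparable short comparable_prefix_le by blast+
  with \<open>i \<noteq> j\<close> show False
    using prefix_same_length_eq by fastforce
qed

lemma tree3_node_unique_below_splitting:
  assumes "is_tree3 p" and "\<forall>s\<in>p. length s < m \<longrightarrow> \<not> splitting p s"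
    and "v \<in> p" "w \<in> p" "length v = m" "length w = m"
  shows "v = w"
  using assms(2-)
proof (induction m arbitrary: v w)
  case 0
  then show ?case by simp
next
  case (Suc m)
  obtain z a where v: "v = z @ [a]"
    using Suc.prems(4) by (metis length_Suc_conv_rev)
  obtain z' b where w: "w = z' @ [b]"
    using Suc.prems(5) by (metis length_Suc_conv_rev)
  have "z \<in> p" "z' \<in> p"
    using is_tree3_prefix_closed[OF assms(1)] Suc.prems(2,3) v w by auto
  moreover have "\<forall>s\<in>p. length s < m \<longrightarrow> \<not> splitting p s"
    using Suc.prems(1) by auto
  ultimately have "z = z'"
    using Suc.IH[of z z'] Suc.prems(4,5) v w by simp
  moreover have "\<not> splitting p z"
    using Suc.prems(1,4) \<open>z \<in> p\<close> v by simp
  ultimately have "a = b"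
    using Suc.prems(2,3) \<open>z \<in> p\<close> v w unfolding splitting_def by blast
  with \<open>z = z'\<close> show ?case
    using v w by simp
qed

(* The shortest splitting node is the stem: below its level, p is a single branch. *)
lemma stem_exists:
  assumes tree: "is_tree3 p" and "perfect3 p"
  shows "\<exists>t\<in>p. splitting p t \<and> (\<forall>s\<in>p. prefix s t \<or> prefix t s)"
proof -
  obtain s0 where "s0 \<in> p" "splitting p s0"
    using assms Nil_in_tree3 unfolding perfect3_def by blast
  then obtain t where t: "t \<in> p" "splitting p t"
    and least: "\<forall>s\<in>p. length s < length t \<longrightarrow> \<not> splitting p s"
    using ex_has_least_nat[of "\<lambda>s. s \<in> p \<and> splitting p s" s0 length] by (metis leD)
  have "prefix s t \<or> prefix t s" if "s \<in> p" for s
  proof (cases "length s \<le> length t")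
    case True
    have "take (length s) t \<in> p"
      using is_tree3_prefix_closed[OF tree t(1)] take_is_prefix by blast
    moreover have "\<forall>s'\<in>p. length s' < length s \<longrightarrow> \<not> splitting p s'"
      using least True by auto
    ultimately have "take (length s) t = s"
      using tree3_node_unique_below_splitting[OF tree] True \<open>s \<in> p\<close> by simp
    then show ?thesis by (metis take_is_prefix)
  next
    case False
    have "take (length t) s \<in> p"
      using is_tree3_prefix_closed[OF tree \<open>s \<in> p\<close>] take_is_prefix by blast
    then have "take (length t) s = t"
      using tree3_node_unique_below_splitting[OF tree least] False t(1) by simp
    then show ?thesis by (metis take_is_prefix)
  qed
  with t show ?thesis by blast
qed

lemma stem_eqI:
  assumes "u \<in> p" "splitting p u" "\<forall>s\<in>p. prefix s u \<or> prefix u s"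
  shows "stem p = u"
  unfolding stem_def
proof (rule the_equality)
  fix t assume t: "t \<in> p \<and> splitting p t \<and> (\<forall>s\<in>p. prefix s t \<or> prefix t s)"
  then have "\<not> strict_prefix t u" "\<not> strict_prefix u t" "prefix t u \<or> prefix u t"
    using splitting_not_strict_prefix assms by blast+
  then show "t = u" by (auto simp: strict_prefix_def)
qed (use assms in blast)

lemma prefix_stem_splitting:
  assumes "is_tree3 p" "perfect3 p" "splitting p u"
  shows "prefix (stem p) u"
proof -
  obtain t where t: "t \<in> p" "splitting p t" "\<forall>s\<in>p. prefix s t \<or> prefix t s"
    using stem_exists assms by blast
  moreover have "u \<in> p"
    using assms(3) unfolding splitting_def by blast
  ultimately have "stem p = t" "\<not> strict_prefix u t" "prefix u t \<or> prefix t u"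
    using stem_eqI splitting_not_strict_prefix assms by blast+
  then show ?thesis by (auto simp: strict_prefix_def)
qed

section \<open>The subtree of a condition through a node\<close>

definition subtree :: "nat list set \<Rightarrow> nat list \<Rightarrow> nat list set" where
  "subtree p u = {v \<in> p. prefix v u \<or> prefix u v}"

lemma subtree_subset: "subtree p u \<subseteq> p"
  unfolding subtree_def by blast

lemma mem_subtree_above: "prefix u v \<Longrightarrow> v \<in> subtree p u \<longleftrightarrow> v \<in> p"
  unfolding subtree_def by blast

lemma splitting_subtree_above:
  assumes "prefix u v"
  shows "splitting (subtree p u) v \<longleftrightarrow> splitting p v"
  using mem_subtree_above[OF assms] mem_subtree_above[OF prefix_prefix[OF assms]]
  unfolding splitting_def by simp

lemma subtree_long_node: "v \<in> subtree p u \<Longrightarrow> length u \<le> length v \<Longrightarrow> prefix u v"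
  unfolding subtree_def using comparable_prefix_le by blast

lemma subtree_short_node: "v \<in> subtree p u \<Longrightarrow> length v \<le> length u \<Longrightarrow> prefix v u"
  unfolding subtree_def using comparable_prefix_le by blast

lemma not_splitting_subtree_short_node:
  assumes "length v < length u"
  shows "\<not> splitting (subtree p u) v"
proof
  assume "splitting (subtree p u) v"
  then obtain i j where "i \<noteq> j" "v @ [i] \<in> subtree p u" "v @ [j] \<in> subtree p u"
    unfolding splitting_def by blast
  moreover have "length (v @ [k]) \<le> length u" for k
    using assms by simp
  ultimately have "prefix (v @ [i]) u" "prefix (v @ [j]) u"
    using subtree_short_node by blast+
  with \<open>i \<noteq> j\<close> show False
    using prefix_same_length_eq by fastforce
qed

lemma is_tree3_subtree:
  assumes "is_tree3 p" "u \<in> p"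
  shows "is_tree3 (subtree p u)"
  unfolding is_tree3_def
proof (intro conjI ballI allI impI)
  show "subtree p u \<noteq> {}"
    using assms unfolding subtree_def by blast
next
  fix t i assume "t \<in> subtree p u" "i \<in> set t"
  then show "i < 3"
    using assms(1) subtree_subset unfolding is_tree3_def by blast
next
  fix t s assume t: "t \<in> subtree p u" and "prefix s t"
  then have "s \<in> p"
    using is_tree3_prefix_closed[OF assms(1)] subtree_subset by blast
  moreover have "prefix s u \<or> prefix u s"
    using t \<open>prefix s t\<close> prefix_same_cases prefix_order.trans unfolding subtree_def by blast
  ultimately show "s \<in> subtree p u"
    unfolding subtree_def by blast
qed

lemma perfect3_subtree:
  assumes "perfect3 p" "splitting p u"
  shows "perfect3 (subtree p u)"
  unfolding perfect3_def
proof
  fix v assume v: "v \<in> subtree p u"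
  show "\<exists>s\<in>subtree p u. prefix v s \<and> splitting (subtree p u) s"
  proof (cases "prefix u v")
    case True
    obtain s where "s \<in> p" "prefix v s" "splitting p s"
      using assms(1) v subtree_subset unfolding perfect3_def by blast
    moreover from True \<open>prefix v s\<close> have "prefix u s"
      by (rule prefix_order.trans)
    ultimately show ?thesis
      by (metis mem_subtree_above splitting_subtree_above)
  next
    case False
    then have "prefix v u"
      using v unfolding subtree_def by blast
    moreover have "u \<in> p"
      using assms(2) unfolding splitting_def by blast
    ultimately show ?thesis
      using assms(2) mem_subtree_above[of u u] splitting_subtree_above[of u u] by blast
  qed
qed

lemma stem_subtree:
  assumes "splitting p u"
  shows "stem (subtree p u) = u"
proof (rule stem_eqI)
  show "u \<in> subtree p u"
    using assms mem_subtree_above[of u u] unfolding splitting_def by blast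
  show "splitting (subtree p u) u"
    using assms splitting_subtree_above[of u u] by simp
  show "\<forall>s\<in>subtree p u. prefix s u \<or> prefix u s"
    unfolding subtree_def by blast
qed

lemma splitting_subtree_imp_above:
  assumes "splitting (subtree p u) t"
  shows "prefix u t"
proof -
  have "t \<in> subtree p u"
    using assms unfolding splitting_def by blast
  moreover have "length u \<le> length t"
    using assms not_splitting_subtree_short_node[of t u p] by (meson not_le)
  ultimately show ?thesis
    by (rule subtree_long_node)
qed

lemma splitting_levels_subtree:
  assumes levels: "\<forall>t\<in>p. length t \<in> A \<longleftrightarrow> splitting p t" and t: "t \<in> subtree p u"
  shows "length t \<in> {k \<in> A. length u \<le> k} \<longleftrightarrow> splitting (subtree p u) t"
proof (cases "length u \<le> length t")
  case True
  then show ?thesis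
    using levels t subtree_subset splitting_subtree_above[OF subtree_long_node[OF t True]]
    by auto
next
  case False
  then show ?thesis
    using not_splitting_subtree_short_node[of t u p] by simp
qed

lemma uniform_nonsplitting_subtree:
  assumes uniform: "\<forall>s\<in>p. \<forall>t\<in>p. \<not> splitting p s \<and> \<not> splitting p t \<and> length s = length t
      \<longrightarrow> (\<forall>i<2. s @ [i] \<in> p \<longleftrightarrow> t @ [i] \<in> p)"
    and s: "s \<in> subtree p u" and t: "t \<in> subtree p u"
    and nonsplit: "\<not> splitting (subtree p u) s" "\<not> splitting (subtree p u) t"
    and "length s = length t" "i < 2"
  shows "s @ [i] \<in> subtree p u \<longleftrightarrow> t @ [i] \<in> subtree p u"
proof (cases "length u \<le> length s")
  case True
  then have "prefix u s" "prefix u t"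
    using subtree_long_node s t \<open>length s = length t\<close> by auto
  then have "s @ [i] \<in> p \<longleftrightarrow> t @ [i] \<in> p"
    using uniform s t subtree_subset nonsplit splitting_subtree_above assms(6,7) by blast
  with \<open>prefix u s\<close> \<open>prefix u t\<close> show ?thesis
    using mem_subtree_above prefix_prefix by metis
next
  case False
  then have "s = t"
    using subtree_short_node s t \<open>length s = length t\<close> prefix_same_length_eq
    by (metis nat_le_linear)
  then show ?thesis by simp
qed

lemma T_cond_subtree:
  assumes cond: "T_cond p A" and u: "splitting p u"
  shows "T_cond (subtree p u) {k \<in> A. length u \<le> k}"
proof -
  have tree: "is_tree3 p" and perfect: "perfect3 p"
    and levels: "\<forall>t\<in>p. length t \<in> A \<longleftrightarrow> splitting p t"
    and full: "\<forall>t\<in>p. splitting p t \<longrightarrow> (\<forall>i<3. t @ [i] \<in> p)"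
    and no_2: "\<forall>s\<in>p. prefix (stem p) s \<and> \<not> splitting p s \<longrightarrow> s @ [2] \<notin> p"
    and uniform: "\<forall>s\<in>p. \<forall>t\<in>p. \<not> splitting p s \<and> \<not> splitting p t \<and> length s = length t
          \<longrightarrow> (\<forall>i<2. s @ [i] \<in> p \<longleftrightarrow> t @ [i] \<in> p)"
    using cond unfolding T_cond_def by blast+
  have "u \<in> p"
    using u unfolding splitting_def by blast
  show ?thesis
    unfolding T_cond_def
  proof (intro conjI ballI impI allI)
    show "is_tree3 (subtree p u)" "perfect3 (subtree p u)"
      using is_tree3_subtree perfect3_subtree tree perfect \<open>u \<in> p\<close> u by auto
  next
    fix t assume "t \<in> subtree p u"
    with levels show "length t \<in> {k \<in> A. length u \<le> k} \<longleftrightarrow> splitting (subtree p u) t"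
      by (rule splitting_levels_subtree)
  next
    fix t and i :: nat assume t: "t \<in> subtree p u" "splitting (subtree p u) t" "i < 3"
    then have "prefix u t" "splitting p t"
      using splitting_subtree_imp_above splitting_subtree_above by blast+
    then show "t @ [i] \<in> subtree p u"
      using full t subtree_subset mem_subtree_above[OF prefix_prefix[OF \<open>prefix u t\<close>]] by auto
  next
    fix s assume s: "s \<in> subtree p u" "prefix (stem (subtree p u)) s \<and> \<not> splitting (subtree p u) s"
    then have "prefix u s"
      using stem_subtree[OF u] by simp
    moreover have "prefix (stem p) u"
      using prefix_stem_splitting tree perfect u by blast
    ultimately have "s @ [2] \<notin> p"
      using no_2 s subtree_subset splitting_subtree_above prefix_order.trans by blast
    then show "s @ [2] \<notin> subtree p u"
      using subtree_subset by blast
  next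
    fix s t and i :: nat
    assume "s \<in> subtree p u" "t \<in> subtree p u"
      and "\<not> splitting (subtree p u) s \<and> \<not> splitting (subtree p u) t \<and> length s = length t"
      and "i < 2"
    with uniform show "s @ [i] \<in> subtree p u \<longleftrightarrow> t @ [i] \<in> subtree p u"
      using uniform_nonsplitting_subtree by blast
  qed
qed

lemma branch_through_subtree_root:
  assumes "x \<in> body (subtree p u)"
  shows "map x [0..<length u] = u"
  using assms subtree_short_node[of "map x [0..<length u]" p u]
    prefix_length_ge_imp_eq[of "map x [0..<length u]" u]
  unfolding body_def by simp

section \<open>Nowhere dense and meager sets\<close>

lemma splitting_node_beyond:
  assumes "is_tree3 p" "perfect3 p"
  shows "\<exists>s\<in>p. splitting p s \<and> n \<le> length s"
proof (induction n)
  case 0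
  then show ?case
    using assms Nil_in_tree3 unfolding perfect3_def by blast
next
  case (Suc n)
  then obtain s i where "splitting p s" "n \<le> length s" "s @ [i] \<in> p"
    unfolding splitting_def by blast
  then obtain s' where "s' \<in> p" "prefix (s @ [i]) s'" "splitting p s'"
    using assms(2) unfolding perfect3_def by blast
  then show ?case
    using \<open>n \<le> length s\<close> prefix_length_le by fastforce
qed

lemma T_nowhere_dense_no_2_from: "T_nowhere_dense {x \<in> Cantor3. \<forall>m\<ge>n. x m \<noteq> 2}"
  unfolding T_nowhere_dense_def
proof (intro allI impI)
  fix p A assume cond: "T_cond p A"
  then have tree: "is_tree3 p" and perfect: "perfect3 p"
    unfolding T_cond_def by auto
  obtain s where s: "s \<in> p" "splitting p s" "n \<le> length s"
    using splitting_node_beyond tree perfect by blast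
  then have "s @ [2] \<in> p"
    using cond unfolding T_cond_def by simp
  then obtain u where u: "prefix (s @ [2]) u" "splitting p u"
    using perfect unfolding perfect3_def by blast
  have "x (length s) = 2" if "x \<in> body (subtree p u)" for x
  proof -
    have "length s < length u"
      using u(1) prefix_length_le by fastforce
    moreover have "u ! length s = 2"
      using u(1) by (auto simp: prefix_def nth_append)
    ultimately show ?thesis
      using branch_through_subtree_root[OF that] by (metis add_0 diff_zero nth_map_upt)
  qed
  then have "body (subtree p u) \<inter> {x \<in> Cantor3. \<forall>m\<ge>n. x m \<noteq> 2} = {}"
    using s(3) by blast
  then show "\<exists>q B. T_cond q B \<and> q \<subseteq> p \<and> body q \<inter> {x \<in> Cantor3. \<forall>m\<ge>n. x m \<noteq> 2} = {}"
    using T_cond_subtree[OF cond u(2)] subtree_subset by blast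
qed

lemma T_nowhere_dense_subset: "T_nowhere_dense Y \<Longrightarrow> X \<subseteq> Y \<Longrightarrow> T_nowhere_dense X"
  unfolding T_nowhere_dense_def by blast

lemma T_meager_UN: "(\<And>n::nat. T_nowhere_dense (N n)) \<Longrightarrow> T_meager (\<Union>n. N n)"
  unfolding T_meager_def by blast

lemma T_meager_iff_covered:
  "T_meager X \<longleftrightarrow> (\<exists>N. (\<forall>n::nat. T_nowhere_dense (N n)) \<and> X \<subseteq> (\<Union>n. N n))"
proof
  assume "\<exists>N. (\<forall>n::nat. T_nowhere_dense (N n)) \<and> X \<subseteq> (\<Union>n. N n)"
  then obtain N where N: "\<And>n::nat. T_nowhere_dense (N n)" "X \<subseteq> (\<Union>n. N n)"
    by blast
  have "T_meager (\<Union>n. N n \<inter> X)"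
    by (rule T_meager_UN, rule T_nowhere_dense_subset[OF N(1)]) blast
  moreover have "(\<Union>n. N n \<inter> X) = X"
    using N(2) by blast
  ultimately show "T_meager X"
    by simp
qed (unfold T_meager_def, blast)

lemma T_meager_subset: "T_meager Y \<Longrightarrow> X \<subseteq> Y \<Longrightarrow> T_meager X"
  unfolding T_meager_iff_covered by blast

lemma T_meager_Un:
  assumes "T_meager X" "T_meager Y"
  shows "T_meager (X \<union> Y)"
proof -
  obtain M N where M: "\<forall>n::nat. T_nowhere_dense (M n)" "X \<subseteq> (\<Union>n. M n)"
    and N: "\<forall>n::nat. T_nowhere_dense (N n)" "Y \<subseteq> (\<Union>n. N n)"
    using assms unfolding T_meager_iff_covered by meson
  define L where "L k = (if even k then M (k div 2) else N (k div 2))" for k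
  have "X \<union> Y \<subseteq> (\<Union>k. L k)"
  proof
    fix x assume "x \<in> X \<union> Y"
    then obtain n where "x \<in> M n \<or> x \<in> N n"
      using M(2) N(2) by blast
    then have "x \<in> L (2 * n) \<or> x \<in> L (2 * n + 1)"
      unfolding L_def by simp
    then show "x \<in> (\<Union>k. L k)"
      by blast
  qed
  moreover have "\<forall>k. T_nowhere_dense (L k)"
    using M(1) N(1) unfolding L_def by simp
  ultimately show ?thesis
    unfolding T_meager_iff_covered by blast
qed

lemma T_measurable_meager_diff:
  assumes "T_measurable X" "T_meager (X - Y)" "T_meager (Y - X)"
  shows "T_measurable Y"
  unfolding T_measurable_def
proof (intro allI impI)
  fix p A assume "T_cond p A"
  then obtain q B where q: "T_cond q B" "q \<subseteq> p"
    and meager: "T_meager (body q \<inter> X) \<or> T_meager (body q - X)"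
    using assms(1) unfolding T_measurable_def by blast
  from meager have "T_meager (body q \<inter> Y) \<or> T_meager (body q - Y)"
  proof
    assume "T_meager (body q \<inter> X)"
    then have "T_meager (body q \<inter> X \<union> (Y - X))"
      using assms(3) by (rule T_meager_Un)
    then have "T_meager (body q \<inter> Y)"
      by (rule T_meager_subset) blast
    then show ?thesis ..
  next
    assume "T_meager (body q - X)"
    then have "T_meager ((body q - X) \<union> (X - Y))"
      using assms(2) by (rule T_meager_Un)
    then have "T_meager (body q - Y)"
      by (rule T_meager_subset) blast
    then show ?thesis ..
  qed
  with q show "\<exists>q B. T_cond q B \<and> q \<subseteq> p \<and> (T_meager (body q \<inter> Y) \<or> T_meager (body q - Y))"
    by blast
qed

theorem mainTheorem9:
  fixes H :: "(nat \<Rightarrow> nat) set"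
  defines "H \<equiv> {x \<in> Cantor3. infinite {n. x n = 2}}"
  shows "T_comeager H \<and>
    (\<forall>X. X \<subseteq> Cantor3 \<longrightarrow> (T_measurable X \<longleftrightarrow> T_measurable (X \<inter> H)))"
proof -
  have "Cantor3 - H = (\<Union>n. {x \<in> Cantor3. \<forall>m\<ge>n. x m \<noteq> 2})"
    unfolding H_def infinite_nat_iff_unbounded_le by auto
  then have comeager: "T_comeager H"
    unfolding T_comeager_def using T_meager_UN[OF T_nowhere_dense_no_2_from] by simp
  have "T_measurable X \<longleftrightarrow> T_measurable (X \<inter> H)" if "X \<subseteq> Cantor3" for X
  proof -
    have "T_meager (X - X \<inter> H)" "T_meager (X \<inter> H - X)"
      using comeager unfolding T_comeager_def by (rule T_meager_subset; use that in blast)+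
    then show ?thesis
      using T_measurable_meager_diff[of X "X \<inter> H"] T_measurable_meager_diff[of "X \<inter> H" X] by blast
  qed
  with comeager show ?thesis by blast
qed

end
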